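(* Let $X$ be a graph, $F$ a graph, and $\phi$ an $\mathrm{Aut}(F)$-voltage assignment on $X$. Let $\Gamma$ act on $X$ and $\Delta$ act on $F$ by graph automorphisms without inversions, such that the pair $(\Gamma, \Delta)$ is $\phi$-compatible. Then the product action $$(\gamma, \delta)(x, i) = (\gamma x, \delta i), \qquad (\gamma,\delta) \in \Gamma \times \Delta, \ (x,i) \in V(X \times^{\phi} F),$$ is an action by graph automorphisms on $X \times^{\phi} F$. Furthermore, if the actions of $\Gamma$ on $X$ and of $\Delta$ on $F$ are of finite co-volume, so is the action of $\Gamma \times \Delta$ on $X \times^{\phi} F$.
   Context: For a graph $G$, $E(\overrightarrow{G})$ is the set of ordered edges (each edge with both orientations); an $\mathrm{Aut}(F)$-voltage assignment on $G$ is a map $\phi: E(\overrightarrow{G}) \to \mathrm{Aut}(F)$ with $\phi(uv) = \phi(vu)^{-1}$. The graph bundle $X \times^{\phi} F$ has vertex set $V(X)\times V(F)$, with $(u,i) \sim (v,j)$ iff either $u \sim v$ and $j = i^{\phi(uv)}$ (the image of $i$ under $\phi(uv)$), or $u = v$ and $i \sim j$ in $F$. The action of $\Gamma$ on $X$ is $(F,\phi)$-compatible if $\phi(\gamma(u)\gamma(v)) = \phi(uv)$ for all edges $uv$ and all $\gamma \in \Gamma$. The action of $\Delta$ on $F$ (regarded as a subgroup of $\mathrm{Aut}(F)$) is $(X,\phi)$-compatible if the image of $\phi$ is contained in the centralizer $C_{\mathrm{Aut}(F)}(\Delta)$. The pair $(\Gamma,\Delta)$ is $\phi$-compatible if both hold.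 An action of a group $G$ on a graph is of finite co-volume if every vertex stabilizer $G_v$ is finite and $\sum_{v \in \mathcal{F}_0} 1/|G_v| < \infty$, where $\mathcal{F}_0$ is a set of representatives of the vertex orbits. *)

theory Defs
  imports "HOL-Analysis.Analysis" "HOL-Algebra.Group_Action"
begin

definition graph :: "'a set \<Rightarrow> ('a \<Rightarrow> 'a \<Rightarrow> bool) \<Rightarrow> bool" where
  "graph V E \<longleftrightarrow> (\<forall>u v. E u v \<longrightarrow> u \<in> V \<and> v \<in> V \<and> E v u)"

definition graph_aut :: "'a set \<Rightarrow> ('a \<Rightarrow> 'a \<Rightarrow> bool) \<Rightarrow> ('a \<Rightarrow> 'a) \<Rightarrow> bool" where
  "graph_aut V E f \<longleftrightarrow> bij_betw f V V \<and> (\<forall>u\<in>V. \<forall>v\<in>V. E u v \<longleftrightarrow> E (f u) (f v))"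

definition voltage_assignment ::
  "'a set \<Rightarrow> ('a \<Rightarrow> 'a \<Rightarrow> bool) \<Rightarrow> 'b set \<Rightarrow> ('b \<Rightarrow> 'b \<Rightarrow> bool) \<Rightarrow> ('a \<Rightarrow> 'a \<Rightarrow> 'b \<Rightarrow> 'b) \<Rightarrow> bool" where
  "voltage_assignment V E W EF \<phi> \<longleftrightarrow>
     (\<forall>u v. E u v \<longrightarrow> graph_aut W EF (\<phi> u v) \<and> (\<forall>i\<in>W. \<phi> v u (\<phi> u v i) = i))"

text \<open>Adjacency of the graph bundle X \<times>^\<phi> F (vertex set V \<times> W).\<close>
definition bundle_adj ::
  "('a \<Rightarrow> 'a \<Rightarrow> bool) \<Rightarrow> ('b \<Rightarrow> 'b \<Rightarrow> bool) \<Rightarrow> ('a \<Rightarrow> 'a \<Rightarrow> 'b \<Rightarrow> 'b) \<Rightarrow> ('a \<times> 'b) \<Rightarrow> ('a \<times> 'b) \<Rightarrow> bool" where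
  "bundle_adj E EF \<phi> p q \<longleftrightarrow>
     (E (fst p) (fst q) \<and> snd q = \<phi> (fst p) (fst q) (snd p)) \<or>
     (fst p = fst q \<and> EF (snd p) (snd q))"

definition aut_action :: "('g, 'm) monoid_scheme \<Rightarrow> 'a set \<Rightarrow> ('a \<Rightarrow> 'a \<Rightarrow> bool) \<Rightarrow> ('g \<Rightarrow> 'a \<Rightarrow> 'a) \<Rightarrow> bool" where
  "aut_action G V E \<alpha> \<longleftrightarrow> group_action G V \<alpha> \<and> (\<forall>g\<in>carrier G. graph_aut V E (\<alpha> g))"

definition without_inversions :: "('g, 'm) monoid_scheme \<Rightarrow> ('a \<Rightarrow> 'a \<Rightarrow> bool) \<Rightarrow> ('g \<Rightarrow> 'a \<Rightarrow> 'a) \<Rightarrow> bool" where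
  "without_inversions G E \<alpha> \<longleftrightarrow>
     (\<forall>g\<in>carrier G. \<forall>u v. E u v \<longrightarrow> \<not> (\<alpha> g u = v \<and> \<alpha> g v = u))"

definition F_phi_compatible :: "('g, 'm) monoid_scheme \<Rightarrow> ('a \<Rightarrow> 'a \<Rightarrow> bool) \<Rightarrow> 'b set
    \<Rightarrow> ('a \<Rightarrow> 'a \<Rightarrow> 'b \<Rightarrow> 'b) \<Rightarrow> ('g \<Rightarrow> 'a \<Rightarrow> 'a) \<Rightarrow> bool" where
  "F_phi_compatible G E W \<phi> \<alpha> \<longleftrightarrow>
     (\<forall>g\<in>carrier G. \<forall>u v. E u v \<longrightarrow> (\<forall>i\<in>W. \<phi> (\<alpha> g u) (\<alpha> g v) i = \<phi> u v i))"

text \<open>(X,\<phi>)-compatibility of the action of \<Delta> on F: the image of \<phi> lies in the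
  centralizer of \<Delta> in Aut(F).\<close>
definition X_phi_compatible :: "('h, 'n) monoid_scheme \<Rightarrow> ('a \<Rightarrow> 'a \<Rightarrow> bool) \<Rightarrow> 'b set
    \<Rightarrow> ('a \<Rightarrow> 'a \<Rightarrow> 'b \<Rightarrow> 'b) \<Rightarrow> ('h \<Rightarrow> 'b \<Rightarrow> 'b) \<Rightarrow> bool" where
  "X_phi_compatible H E W \<phi> \<beta> \<longleftrightarrow>
     (\<forall>h\<in>carrier H. \<forall>u v. E u v \<longrightarrow> (\<forall>i\<in>W. \<phi> u v (\<beta> h i) = \<beta> h (\<phi> u v i)))"

text \<open>Finite co-volume: finite stabilizers and \<Sum> over orbit representatives of
  1/|G_v| finite (a non-negative family, so summability = finiteness of the sum).\<close>
definition finite_covolume :: "('g, 'm) monoid_scheme \<Rightarrow> 'a set \<Rightarrow> ('g \<Rightarrow> 'a \<Rightarrow> 'a) \<Rightarrow> bool" where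
  "finite_covolume G V \<alpha> \<longleftrightarrow>
     (\<forall>v\<in>V. finite (stabilizer G \<alpha> v)) \<and>
     ((\<lambda>orb. 1 / real (card (stabilizer G \<alpha> (SOME v. v \<in> orb)))) summable_on orbits G V \<alpha>)"

definition prod_action :: "'a set \<Rightarrow> 'b set \<Rightarrow> ('g \<Rightarrow> 'a \<Rightarrow> 'a) \<Rightarrow> ('h \<Rightarrow> 'b \<Rightarrow> 'b)
    \<Rightarrow> ('g \<times> 'h) \<Rightarrow> ('a \<times> 'b) \<Rightarrow> ('a \<times> 'b)" where
  "prod_action V W \<alpha> \<beta> = (\<lambda>(g, h). \<lambda>p \<in> V \<times> W. (\<alpha> g (fst p), \<beta> h (snd p)))"

end

theory Submission
  imports Defs
begin

text \<open>A pair (\<gamma>, \<delta>) preserves the vertical edges of X \<times>^\<phi> F because \<delta> is an automorphism of F,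
  and the horizontal ones because \<phi>(\<gamma>u \<gamma>v) \<delta> = \<phi>(uv) \<delta> = \<delta> \<phi>(uv) by the two compatibility
  conditions.  The stabilizer of (x, i) is \<Gamma>_x \<times> \<Delta>_i and the orbits of \<Gamma> \<times> \<Delta> are the products of
  orbits, so the co-volume sum of the product action is the product of the two co-volume sums,
  which is finite by Tonelli's theorem for non-negative families.\<close>

lemma summable_on_product_nonneg:
  fixes f :: "'a \<Rightarrow> real" and g :: "'b \<Rightarrow> real"
  assumes "f summable_on A" and "g summable_on B"
    and "\<And>x. x \<in> A \<Longrightarrow> f x \<ge> 0" and "\<And>y. y \<in> B \<Longrightarrow> g y \<ge> 0"
  shows "(\<lambda>(x, y). f x * g y) summable_on A \<times> B"
proof (rule summable_on_SigmaI[where g = "\<lambda>x. f x * infsum g B"])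
  fix x
  show "((\<lambda>y. (\<lambda>(x, y). f x * g y) (x, y)) has_sum f x * infsum g B) B"
    using has_sum_cmult_right[OF has_sum_infsum[OF assms(2)]] by simp
  show "(\<lambda>x. f x * infsum g B) summable_on A"
    using assms(1) by (rule summable_on_cmult_left)
qed (use assms in auto)

lemma (in group_action) orbits_ne_empty:
  "orb \<in> orbits G E \<phi> \<Longrightarrow> orb \<noteq> {}"
  using orbit_refl by (auto simp: orbits_def)

lemma (in group_action) stabilizer_conjugate:
  assumes "g \<in> carrier G" and "x \<in> E"
  shows "(\<lambda>h. g \<otimes> h \<otimes> inv g) ` stabilizer G \<phi> x = stabilizer G \<phi> (\<phi> g x)"
proof -
  interpret group G
    using group_hom group_hom.axioms(1) by blast
  have conj_subset: "(\<lambda>h. g \<otimes> h \<otimes> inv g) ` stabilizer G \<phi> x \<subseteq> stabilizer G \<phi> (\<phi> g x)"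
    if g: "g \<in> carrier G" and x: "x \<in> E" for g x
  proof
    fix k assume "k \<in> (\<lambda>h. g \<otimes> h \<otimes> inv g) ` stabilizer G \<phi> x"
    then obtain h where h: "h \<in> carrier G" "\<phi> h x = x" and k: "k = g \<otimes> h \<otimes> inv g"
      by (auto simp: stabilizer_def)
    have "\<phi> k (\<phi> g x) = \<phi> g (\<phi> h (\<phi> (inv g) (\<phi> g x)))"
      using g x h k composition_rule element_image by (metis inv_closed m_closed)
    also have "\<phi> (inv g) (\<phi> g x) = x"
      using orbit_sym_aux g x by blast
    finally show "k \<in> stabilizer G \<phi> (\<phi> g x)"
      using g h k by (simp add: stabilizer_def)
  qed
  show ?thesis
  proof
    show "stabilizer G \<phi> (\<phi> g x) \<subseteq> (\<lambda>h. g \<otimes> h \<otimes> inv g) ` stabilizer G \<phi> x"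
    proof
      fix k assume k: "k \<in> stabilizer G \<phi> (\<phi> g x)"
      have "\<phi> (inv g) (\<phi> g x) = x"
        using orbit_sym_aux assms by blast
      then have "inv g \<otimes> k \<otimes> inv (inv g) \<in> stabilizer G \<phi> x"
        using conj_subset[of "inv g" "\<phi> g x"] assms k element_image by auto
      moreover have "k \<in> carrier G"
        using k stabilizer_subset by blast
      then have "k = g \<otimes> (inv g \<otimes> k \<otimes> inv (inv g)) \<otimes> inv g"
        using conjugation_is_surj assms(1) by simp
      ultimately show "k \<in> (\<lambda>h. g \<otimes> h \<otimes> inv g) ` stabilizer G \<phi> x"
        by blast
    qed
  qed (rule conj_subset[OF assms])
qed

lemma (in group_action) card_stabilizer_orbit:
  assumes "x \<in> E" and "y \<in> orbit G \<phi> x"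
  shows "card (stabilizer G \<phi> y) = card (stabilizer G \<phi> x)"
proof -
  interpret group G
    using group_hom group_hom.axioms(1) by blast
  obtain g where g: "g \<in> carrier G" and y: "y = \<phi> g x"
    using assms(2) by (auto simp: orbit_def)
  have "inj_on (\<lambda>h. g \<otimes> h \<otimes> inv g) (stabilizer G \<phi> x)"
    using g stabilizer_subset conjugation_is_inj by (meson inj_onI subsetD)
  then show ?thesis
    using stabilizer_conjugate[OF g assms(1)] y by (metis card_image)
qed

definition covolume_weight :: "('g, 'm) monoid_scheme \<Rightarrow> ('g \<Rightarrow> 'a \<Rightarrow> 'a) \<Rightarrow> 'a set \<Rightarrow> real" where
  "covolume_weight G \<alpha> orb = 1 / real (card (stabilizer G \<alpha> (SOME v. v \<in> orb)))"

lemma finite_covolume_iff: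
  "finite_covolume G V \<alpha> \<longleftrightarrow>
     (\<forall>v\<in>V. finite (stabilizer G \<alpha> v)) \<and> covolume_weight G \<alpha> summable_on orbits G V \<alpha>"
  by (simp add: finite_covolume_def covolume_weight_def[abs_def])

lemma (in group_action) covolume_weight_eq:
  assumes "orb \<in> orbits G E \<phi>" and "v \<in> orb"
  shows "covolume_weight G \<phi> orb = 1 / real (card (stabilizer G \<phi> v))"
proof -
  obtain x where x: "x \<in> E" and orb: "orb = orbit G \<phi> x"
    using assms(1) by (auto simp: orbits_def)
  have "(SOME v. v \<in> orb) \<in> orb"
    using assms(2) by (rule someI)
  then show ?thesis
    using card_stabilizer_orbit x orb assms(2) by (simp add: covolume_weight_def)
qed

lemma prod_action_apply [simp]:
  "v \<in> V \<Longrightarrow> i \<in> W \<Longrightarrow> prod_action V W \<alpha> \<beta> (g, h) (v, i) = (\<alpha> g v, \<beta> h i)"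
  by (simp add: prod_action_def)

lemma group_action_prod_action:
  assumes "group_action G V \<alpha>" and "group_action H W \<beta>"
  shows "group_action (G \<times>\<times> H) (V \<times> W) (prod_action V W \<alpha> \<beta>)"
proof -
  interpret A: group_action G V \<alpha> by fact
  interpret B: group_action H W \<beta> by fact
  let ?P = "prod_action V W \<alpha> \<beta>"
  have bij: "?P (g, h) \<in> Bij (V \<times> W)" if "g \<in> carrier G" "h \<in> carrier H" for g h
  proof -
    have "bij_betw (map_prod (\<alpha> g) (\<beta> h)) (V \<times> W) (V \<times> W)"
      using A.bij_prop0 B.bij_prop0 that by (intro bij_betw_map_prod) (auto simp: Bij_def)
    then have "bij_betw (?P (g, h)) (V \<times> W) (V \<times> W)"
      by (rule bij_betw_cong[THEN iffD1, rotated]) auto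
    then show ?thesis
      by (auto simp: Bij_def prod_action_def)
  qed
  have mult: "?P ((g, h) \<otimes>\<^bsub>G \<times>\<times> H\<^esub> (g', h')) = compose (V \<times> W) (?P (g, h)) (?P (g', h'))"
    if "g \<in> carrier G" "h \<in> carrier H" "g' \<in> carrier G" "h' \<in> carrier H" for g h g' h'
  proof
    fix p
    show "?P ((g, h) \<otimes>\<^bsub>G \<times>\<times> H\<^esub> (g', h')) p = compose (V \<times> W) (?P (g, h)) (?P (g', h')) p"
    proof (cases "p \<in> V \<times> W")
      case True
      then obtain v i where p: "p = (v, i)" and v: "v \<in> V" and i: "i \<in> W"
        by blast
      have "\<alpha> g' v \<in> V" "\<beta> h' i \<in> W"
        using that v i A.element_image B.element_image by blast+
      then show ?thesis
        using that v i by (simp add: p compose_def A.composition_rule B.composition_rule)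
    qed (simp add: compose_def prod_action_def)
  qed
  have "?P \<in> hom (G \<times>\<times> H) (BijGroup (V \<times> W))"
  proof (rule homI)
    fix x assume "x \<in> carrier (G \<times>\<times> H)"
    then show "?P x \<in> carrier (BijGroup (V \<times> W))"
      using bij by (auto simp: BijGroup_def)
  next
    fix x y assume "x \<in> carrier (G \<times>\<times> H)" "y \<in> carrier (G \<times>\<times> H)"
    then show "?P (x \<otimes>\<^bsub>G \<times>\<times> H\<^esub> y) = ?P x \<otimes>\<^bsub>BijGroup (V \<times> W)\<^esub> ?P y"
      using bij mult by (auto simp: BijGroup_def)
  qed
  moreover have "group G" "group H"
    using A.group_hom B.group_hom group_hom.axioms(1) by blast+
  ultimately show ?thesis
    unfolding group_action_def group_hom_def group_hom_axioms_def
    by (simp add: DirProd_group group_BijGroup)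
qed
lemma stabilizer_prod_action:
  assumes "v \<in> V" and "i \<in> W"
  shows "stabilizer (G \<times>\<times> H) (prod_action V W \<alpha> \<beta>) (v, i) = stabilizer G \<alpha> v \<times> stabilizer H \<beta> i"
  using assms by (auto simp: stabilizer_def)

lemma orbits_prod_action:
  "orbits (G \<times>\<times> H) (V \<times> W) (prod_action V W \<alpha> \<beta>) =
   (\<lambda>(A, B). A \<times> B) ` (orbits G V \<alpha> \<times> orbits H W \<beta>)"
proof -
  have "orbit (G \<times>\<times> H) (prod_action V W \<alpha> \<beta>) (v, i) = orbit G \<alpha> v \<times> orbit H \<beta> i"
    if "v \<in> V" "i \<in> W" for v i
    using that by (auto simp: orbit_def)
  then show ?thesis
    unfolding orbits_def by fastforce
qed

lemma covolume_weight_prod_action: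
  assumes "group_action G V \<alpha>" and "group_action H W \<beta>"
    and "A \<in> orbits G V \<alpha>" and "B \<in> orbits H W \<beta>"
  shows "covolume_weight (G \<times>\<times> H) (prod_action V W \<alpha> \<beta>) (A \<times> B) =
         covolume_weight G \<alpha> A * covolume_weight H \<beta> B"
proof -
  interpret A: group_action G V \<alpha> by fact
  interpret B: group_action H W \<beta> by fact
  interpret P: group_action "G \<times>\<times> H" "V \<times> W" "prod_action V W \<alpha> \<beta>"
    using assms(1,2) by (rule group_action_prod_action)
  obtain a b where a: "a \<in> A" and b: "b \<in> B"
    using A.orbits_ne_empty B.orbits_ne_empty assms(3,4) by blast
  have ab: "a \<in> V" "b \<in> W"
    using a b assms(3,4) A.orbits_coverture B.orbits_coverture by blast+
  have "A \<times> B \<in> orbits (G \<times>\<times> H) (V \<times> W) (prod_action V W \<alpha> \<beta>)"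
    using assms(3,4) by (auto simp: orbits_prod_action)
  then have "covolume_weight (G \<times>\<times> H) (prod_action V W \<alpha> \<beta>) (A \<times> B) =
             1 / real (card (stabilizer (G \<times>\<times> H) (prod_action V W \<alpha> \<beta>) (a, b)))"
    using a b by (intro P.covolume_weight_eq) auto
  also have "\<dots> = 1 / real (card (stabilizer G \<alpha> a)) * (1 / real (card (stabilizer H \<beta> b)))"
    using ab by (simp add: stabilizer_prod_action card_cartesian_product)
  also have "\<dots> = covolume_weight G \<alpha> A * covolume_weight H \<beta> B"
    using assms(3,4) a b by (simp add: A.covolume_weight_eq B.covolume_weight_eq)
  finally show ?thesis .
qed

lemma finite_covolume_prod_action:
  assumes "group_action G V \<alpha>" and "group_action H W \<beta>"
    and "finite_covolume G V \<alpha>" and "finite_covolume H W \<beta>"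
  shows "finite_covolume (G \<times>\<times> H) (V \<times> W) (prod_action V W \<alpha> \<beta>)"
proof -
  interpret A: group_action G V \<alpha> by fact
  interpret B: group_action H W \<beta> by fact
  let ?P = "prod_action V W \<alpha> \<beta>"
  have "(\<lambda>(A, B). covolume_weight G \<alpha> A * covolume_weight H \<beta> B) summable_on orbits G V \<alpha> \<times> orbits H W \<beta>"
    using assms(3,4)
    by (intro summable_on_product_nonneg) (auto simp: finite_covolume_iff, simp_all add: covolume_weight_def)
  then have "(covolume_weight (G \<times>\<times> H) ?P \<circ> (\<lambda>(A, B). A \<times> B)) summable_on orbits G V \<alpha> \<times> orbits H W \<beta>"
    by (rule summable_on_cong[THEN iffD1, rotated])
      (auto simp: covolume_weight_prod_action assms(1,2))
  moreover have "inj_on (\<lambda>(A, B). A \<times> B) (orbits G V \<alpha> \<times> orbits H W \<beta>)"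
    using A.orbits_ne_empty B.orbits_ne_empty by (auto intro!: inj_onI simp: times_eq_iff)
  ultimately have "covolume_weight (G \<times>\<times> H) ?P summable_on orbits (G \<times>\<times> H) (V \<times> W) ?P"
    by (simp add: orbits_prod_action summable_on_reindex)
  with assms(3,4) show ?thesis
    by (auto simp: finite_covolume_iff stabilizer_prod_action)
qed

lemma graph_aut_cong:
  assumes "\<And>x. x \<in> V \<Longrightarrow> f x = f' x"
  shows "graph_aut V E f \<longleftrightarrow> graph_aut V E f'"
  using assms by (simp add: graph_aut_def cong: bij_betw_cong)

lemma graph_aut_bundle_map_prod:
  assumes \<phi>: "voltage_assignment V E W EF \<phi>"
    and a: "graph_aut V E a" and b: "graph_aut W EF b"
    and commute: "\<And>u v i. E u v \<Longrightarrow> i \<in> W \<Longrightarrow> \<phi> (a u) (a v) (b i) = b (\<phi> u v i)"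
  shows "graph_aut (V \<times> W) (bundle_adj E EF \<phi>) (map_prod a b)"
  unfolding graph_aut_def
proof (intro conjI ballI)
  show "bij_betw (map_prod a b) (V \<times> W) (V \<times> W)"
    using a b by (intro bij_betw_map_prod) (auto simp: graph_aut_def)
next
  fix p q assume "p \<in> V \<times> W" "q \<in> V \<times> W"
  then obtain u i v j where p: "p = (u, i)" and q: "q = (v, j)"
    and uv: "u \<in> V" "v \<in> V" and ij: "i \<in> W" "j \<in> W"
    by auto
  have inj_a: "a u = a v \<longleftrightarrow> u = v"
    using a uv by (auto simp: graph_aut_def bij_betw_def dest: inj_onD)
  have horizontal: "b j = \<phi> (a u) (a v) (b i) \<longleftrightarrow> j = \<phi> u v i" if "E u v"
  proof -
    have "graph_aut W EF (\<phi> u v)"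
      using \<phi> that by (simp add: voltage_assignment_def)
    then have "\<phi> u v i \<in> W"
      using ij by (auto simp: graph_aut_def bij_betw_def)
    then show ?thesis
      using b ij commute[OF that ij(1)] by (auto simp: graph_aut_def bij_betw_def dest: inj_onD)
  qed
  have "E (a u) (a v) \<longleftrightarrow> E u v" "EF (b i) (b j) \<longleftrightarrow> EF i j"
    using a b uv ij by (auto simp: graph_aut_def)
  then show "bundle_adj E EF \<phi> p q \<longleftrightarrow> bundle_adj E EF \<phi> (map_prod a b p) (map_prod a b q)"
    using inj_a horizontal by (auto simp: bundle_adj_def p q)
qed

lemma aut_action_bundle_prod_action:
  assumes "voltage_assignment V E W EF \<phi>"
    and "aut_action G V E \<alpha>" and "aut_action H W EF \<beta>"
    and "F_phi_compatible G E W \<phi> \<alpha>" and "X_phi_compatible H E W \<phi> \<beta>"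
  shows "aut_action (G \<times>\<times> H) (V \<times> W) (bundle_adj E EF \<phi>) (prod_action V W \<alpha> \<beta>)"
proof -
  have "graph_aut (V \<times> W) (bundle_adj E EF \<phi>) (prod_action V W \<alpha> \<beta> (g, h))"
    if g: "g \<in> carrier G" and h: "h \<in> carrier H" for g h
  proof -
    interpret B: group_action H W \<beta>
      using assms(3) by (simp add: aut_action_def)
    have "graph_aut (V \<times> W) (bundle_adj E EF \<phi>) (map_prod (\<alpha> g) (\<beta> h))"
    proof (rule graph_aut_bundle_map_prod)
      fix u v i assume "E u v" "i \<in> W"
      then show "\<phi> (\<alpha> g u) (\<alpha> g v) (\<beta> h i) = \<beta> h (\<phi> u v i)"
        using assms(4,5) g h B.element_image
        by (auto simp: F_phi_compatible_def X_phi_compatible_def)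
    qed (use assms g h in \<open>auto simp: aut_action_def\<close>)
    then show ?thesis
      by (subst graph_aut_cong) auto
  qed
  then show ?thesis
    using assms(2,3) group_action_prod_action by (auto simp: aut_action_def)
qed

theorem lemma3p2:
  fixes G :: "('g, 'm) monoid_scheme" and H :: "('h, 'n) monoid_scheme"
    and V :: "'a set" and E :: "'a \<Rightarrow> 'a \<Rightarrow> bool"
    and W :: "'b set" and EF :: "'b \<Rightarrow> 'b \<Rightarrow> bool"
    and \<phi> :: "'a \<Rightarrow> 'a \<Rightarrow> 'b \<Rightarrow> 'b"
    and \<alpha> :: "'g \<Rightarrow> 'a \<Rightarrow> 'a" and \<beta> :: "'h \<Rightarrow> 'b \<Rightarrow> 'b"
  assumes "graph V E" and "graph W EF"
    and "voltage_assignment V E W EF \<phi>"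
    and "aut_action G V E \<alpha>" and "without_inversions G E \<alpha>"
    and "aut_action H W EF \<beta>" and "without_inversions H EF \<beta>"
    and "F_phi_compatible G E W \<phi> \<alpha>" and "X_phi_compatible H E W \<phi> \<beta>"
  shows "aut_action (G \<times>\<times> H) (V \<times> W) (bundle_adj E EF \<phi>) (prod_action V W \<alpha> \<beta>) \<and>
         (finite_covolume G V \<alpha> \<and> finite_covolume H W \<beta> \<longrightarrow>
          finite_covolume (G \<times>\<times> H) (V \<times> W) (prod_action V W \<alpha> \<beta>))"
proof (intro conjI impI)
  show "aut_action (G \<times>\<times> H) (V \<times> W) (bundle_adj E EF \<phi>) (prod_action V W \<alpha> \<beta>)"
    using assms(3,4,6,8,9) by (rule aut_action_bundle_prod_action)
next
  assume "finite_covolume G V \<alpha> \<and> finite_covolume H W \<beta>"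
  then show "finite_covolume (G \<times>\<times> H) (V \<times> W) (prod_action V W \<alpha> \<beta>)"
    using assms(4,6) finite_covolume_prod_action by (auto simp: aut_action_def)
qed

end
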